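(* Let $G \sim G_{n,1/2}$ and let $g(n)$ be a sequence of integers such that \[ \mathbf{P}\big(\chi(G) - \zeta(G) \le g(n)\big) > 0.999 \quad \text{for all } n. \] Then there is a sequence of intervals $[s_n, t_n]$ with $t_n - s_n = g(n)$ such that \[ \mathbf{P}\big(\chi(G_{n,1/2}) \in [s_n, t_n]\big) > 0.9 \quad \text{for all } n. \]
   Context: $G_{n,1/2}$ denotes the Erdős–Rényi random graph on $n$ vertices in which each of the $\binom{n}{2}$ possible edges is present independently with probability $1/2$. $\chi(G)$ is the chromatic number of $G$. The cochromatic number $\zeta(G)$ is the minimum number of colours in a vertex colouring of $G$ in which every colour class is either an independent set or a clique. *)

theory Defs
  imports "HOL-Probability.Probability"
begin

text \<open>Simple graphs on the vertex set {0..<n} are represented by their edge sets,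
  i.e. sets of 2-element subsets of {..<n}.\<close>

definition all_edges :: "nat \<Rightarrow> nat set set" where
  "all_edges n = {e. e \<subseteq> {..<n} \<and> card e = 2}"

text \<open>G(n,1/2): each of the n choose 2 edges present independently with probability 1/2,
  which is exactly the uniform distribution on all edge sets.\<close>

definition Gnp_half :: "nat \<Rightarrow> nat set set pmf" where
  "Gnp_half n = pmf_of_set (Pow (all_edges n))"

definition is_clique :: "nat set set \<Rightarrow> nat set \<Rightarrow> bool" where
  "is_clique E S \<longleftrightarrow> (\<forall>u\<in>S. \<forall>v\<in>S. u \<noteq> v \<longrightarrow> {u, v} \<in> E)"

definition is_indep :: "nat set set \<Rightarrow> nat set \<Rightarrow> bool" where
  "is_indep E S \<longleftrightarrow> (\<forall>u\<in>S. \<forall>v\<in>S. {u, v} \<notin> E)"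

definition proper_colouring :: "nat \<Rightarrow> nat set set \<Rightarrow> nat \<Rightarrow> (nat \<Rightarrow> nat) \<Rightarrow> bool" where
  "proper_colouring n E k f \<longleftrightarrow> f ` {..<n} \<subseteq> {..<k} \<and>
     (\<forall>c<k. is_indep E {v. v < n \<and> f v = c})"

definition cochromatic_colouring :: "nat \<Rightarrow> nat set set \<Rightarrow> nat \<Rightarrow> (nat \<Rightarrow> nat) \<Rightarrow> bool" where
  "cochromatic_colouring n E k f \<longleftrightarrow> f ` {..<n} \<subseteq> {..<k} \<and>
     (\<forall>c<k. is_indep E {v. v < n \<and> f v = c} \<or> is_clique E {v. v < n \<and> f v = c})"

definition chromatic_number :: "nat \<Rightarrow> nat set set \<Rightarrow> nat" where
  "chromatic_number n E = (LEAST k. \<exists>f. proper_colouring n E k f)"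

definition cochromatic_number :: "nat \<Rightarrow> nat set set \<Rightarrow> nat" where
  "cochromatic_number n E = (LEAST k. \<exists>f. cochromatic_colouring n E k f)"

end

theory Submission
  imports Defs
begin

text \<open>Let \<open>s\<close> be the smallest integer with \<open>P(\<chi>(G) \<le> s) > 0.05\<close>. Adding edges can only raise
  \<open>\<chi>(G)\<close> and only lower \<open>\<chi>\<close> of the complement, so the events \<open>\<chi>(G) > s + g\<close> and
  \<open>\<chi>(complement of G) \<le> s\<close> are both increasing, and by Harris' inequality they are positively
  correlated. The second one has probability \<open>P(\<chi>(G) \<le> s) > 0.05\<close> because complementation
  preserves \<open>G(n,1/2)\<close>. The colour classes of the complement are cliques of \<open>G\<close>, so on the
  intersection \<open>\<zeta>(G) \<le> \<chi>(complement of G) < \<chi>(G) - g\<close>, an event of probability below \<open>0.001\<close>.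
  Hence \<open>P(\<chi>(G) > s + g) < 0.02\<close>, and \<open>\<chi>(G) \<in> [s, s + g]\<close> with probability more than
  \<open>1 - 0.05 - 0.02\<close>.\<close>

definition up_closed_in :: "'a set \<Rightarrow> 'a set set \<Rightarrow> bool" where
  "up_closed_in A U \<longleftrightarrow> (\<forall>x\<in>U. \<forall>y. x \<subseteq> y \<longrightarrow> y \<subseteq> A \<longrightarrow> y \<in> U)"

lemma up_closed_in_insert_slices:
  assumes "up_closed_in (insert a B) U"
  shows "up_closed_in B U" "up_closed_in B (insert a -` U)" "Pow B \<inter> U \<subseteq> Pow B \<inter> insert a -` U"
proof -
  have up: "y \<in> U" if "x \<in> U" "x \<subseteq> y" "y \<subseteq> insert a B" for x y
    using assms that unfolding up_closed_in_def by blast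
  show "up_closed_in B U"
    unfolding up_closed_in_def using up by (meson subset_insertI2)
  show "up_closed_in B (insert a -` U)"
    unfolding up_closed_in_def
  proof (intro ballI allI impI)
    fix x y assume "x \<in> insert a -` U" "x \<subseteq> y" "y \<subseteq> B"
    then show "y \<in> insert a -` U"
      using up[of "insert a x" "insert a y"] by blast
  qed
  show "Pow B \<inter> U \<subseteq> Pow B \<inter> insert a -` U"
  proof
    fix x assume "x \<in> Pow B \<inter> U"
    then show "x \<in> Pow B \<inter> insert a -` U"
      using up[of x "insert a x"] by blast
  qed
qed

lemma card_Pow_insert_Int:
  assumes "finite B" "a \<notin> B"
  shows "card (Pow (insert a B) \<inter> U) = card (Pow B \<inter> U) + card (Pow B \<inter> insert a -` U)"
proof -
  have split: "Pow (insert a B) \<inter> U = (Pow B \<inter> U) \<union> insert a ` (Pow B \<inter> insert a -` U)"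
    unfolding Pow_insert by blast
  have "inj_on (insert a) (Pow B)"
    using assms(2) by (intro inj_on_inverseI[of _ "\<lambda>x. x - {a}"]) auto
  then have "card (insert a ` (Pow B \<inter> insert a -` U)) = card (Pow B \<inter> insert a -` U)"
    by (meson card_image inf_le1 inj_on_subset)
  moreover have "(Pow B \<inter> U) \<inter> insert a ` (Pow B \<inter> insert a -` U) = {}"
    using assms(2) by auto
  ultimately show ?thesis
    unfolding split using assms(1) by (simp add: card_Un_disjoint)
qed

lemma Chebyshev_sum_ineq_two:
  fixes u0 u1 v0 v1 :: nat
  assumes "u0 \<le> u1" "v0 \<le> v1"
  shows "(u0 + u1) * (v0 + v1) \<le> 2 * (u0 * v0 + u1 * v1)"
proof -
  obtain d e where "u1 = u0 + d" "v1 = v0 + e"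
    using assms le_Suc_ex by blast
  then show ?thesis by (simp add: algebra_simps)
qed

lemma Harris_ineq_card:
  assumes "finite A" "up_closed_in A U" "up_closed_in A V"
  shows "card (Pow A \<inter> U) * card (Pow A \<inter> V) \<le> card (Pow A \<inter> (U \<inter> V)) * 2 ^ card A"
  using assms
proof (induction A arbitrary: U V rule: finite_induct)
  case empty
  then show ?case by (cases "{} \<in> U"; cases "{} \<in> V") auto
next
  case (insert a B)
  let ?U1 = "insert a -` U" and ?V1 = "insert a -` V"
  note U = up_closed_in_insert_slices[OF insert.prems(1)]
  note V = up_closed_in_insert_slices[OF insert.prems(2)]
  have "card (Pow (insert a B) \<inter> U) * card (Pow (insert a B) \<inter> V)
      = (card (Pow B \<inter> U) + card (Pow B \<inter> ?U1)) * (card (Pow B \<inter> V) + card (Pow B \<inter> ?V1))"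
    using insert.hyps by (simp add: card_Pow_insert_Int)
  also have "\<dots> \<le> 2 * (card (Pow B \<inter> U) * card (Pow B \<inter> V) + card (Pow B \<inter> ?U1) * card (Pow B \<inter> ?V1))"
    using U(3) V(3) insert.hyps(1) by (intro Chebyshev_sum_ineq_two card_mono) auto
  also have "\<dots> \<le> 2 * (card (Pow B \<inter> (U \<inter> V)) * 2 ^ card B + card (Pow B \<inter> (?U1 \<inter> ?V1)) * 2 ^ card B)"
    using insert.IH[OF U(1) V(1)] insert.IH[OF U(2) V(2)] by simp
  also have "\<dots> = card (Pow (insert a B) \<inter> (U \<inter> V)) * 2 ^ card (insert a B)"
    using insert.hyps by (simp add: card_Pow_insert_Int algebra_simps)
  finally show ?case .
qed

lemma prob_pmf_of_set_Pow:
  assumes "finite A"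
  shows "measure_pmf.prob (pmf_of_set (Pow A)) U = card (Pow A \<inter> U) / 2 ^ card A"
  using assms by (simp add: measure_pmf_of_set card_Pow Pow_not_empty)

lemma Harris_ineq:
  assumes "finite A" "up_closed_in A U" "up_closed_in A V"
  shows "measure_pmf.prob (pmf_of_set (Pow A)) U * measure_pmf.prob (pmf_of_set (Pow A)) V
    \<le> measure_pmf.prob (pmf_of_set (Pow A)) (U \<inter> V)"
proof -
  have "real (card (Pow A \<inter> U) * card (Pow A \<inter> V)) \<le> real (card (Pow A \<inter> (U \<inter> V)) * 2 ^ card A)"
    using Harris_ineq_card[OF assms] by linarith
  then show ?thesis
    using assms(1) by (simp add: prob_pmf_of_set_Pow field_simps)
qed

lemma map_pmf_of_set_Pow_complement:
  assumes "finite A"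
  shows "map_pmf (\<lambda>E. A - E) (pmf_of_set (Pow A)) = pmf_of_set (Pow A)"
proof -
  have "inj_on (\<lambda>E. A - E) (Pow A)"
    by (intro inj_onI) auto
  moreover have "(\<lambda>E. A - E) ` Pow A = Pow A"
    by (auto intro!: image_eqI[where x = "A - _"])
  ultimately show ?thesis
    using map_pmf_of_set_inj[of "\<lambda>E. A - E" "Pow A"] assms by (simp add: Pow_not_empty)
qed

lemma least_threshold:
  fixes X :: "'a \<Rightarrow> nat"
  assumes "0 \<le> c" "measure M {x. X x \<le> k} > c"
  shows "\<exists>s. measure M {x. X x < s} \<le> c \<and> measure M {x. X x \<le> s} > c"
proof -
  define s where "s = (LEAST s. measure M {x. X x \<le> s} > c)"
  have "measure M {x. X x \<le> s} > c"
    unfolding s_def using assms(2) by (rule LeastI)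
  moreover have "measure M {x. X x < s} \<le> c"
  proof (cases s)
    case 0
    then show ?thesis using assms(1) by simp
  next
    case (Suc m)
    then have "\<not> measure M {x. X x \<le> m} > c"
      using not_less_Least[of m "\<lambda>s. measure M {x. X x \<le> s} > c"] unfolding s_def by simp
    then show ?thesis using Suc by (simp add: less_Suc_eq_le)
  qed
  ultimately show ?thesis by blast
qed

lemma upper_tail_bound:
  fixes X Z :: "'a set \<Rightarrow> nat" and g :: int
  assumes "finite A"
    and mono: "\<And>E E'. E \<subseteq> E' \<Longrightarrow> E' \<subseteq> A \<Longrightarrow> X E \<le> X E'"
    and dual: "\<And>E. E \<subseteq> A \<Longrightarrow> Z E \<le> X (A - E)"
    and close: "measure_pmf.prob (pmf_of_set (Pow A)) {E. int (X E) - int (Z E) \<le> g} > 1 - \<delta>"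
    and lower: "measure_pmf.prob (pmf_of_set (Pow A)) {E. X E \<le> s} > c" and "0 < c"
  shows "measure_pmf.prob (pmf_of_set (Pow A)) {E. int s + g < int (X E)} < \<delta> / c"
proof -
  let ?p = "pmf_of_set (Pow A)"
  let ?P = "measure_pmf.prob ?p"
  define U where "U = {E. int s + g < int (X E)}"
  define V where "V = {E. X (A - E) \<le> s}"
  have "up_closed_in A U"
    unfolding up_closed_in_def U_def
  proof (intro ballI allI impI)
    fix x y assume "x \<in> {E. int s + g < int (X E)}" "x \<subseteq> y" "y \<subseteq> A"
    then show "y \<in> {E. int s + g < int (X E)}"
      using mono[of x y] by simp
  qed
  moreover have "up_closed_in A V"
    unfolding up_closed_in_def V_def
  proof (intro ballI allI impI)
    fix x y assume x: "x \<in> {E. X (A - E) \<le> s}" and "x \<subseteq> y" "y \<subseteq> A"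
    then have "X (A - y) \<le> X (A - x)"
      by (intro mono) auto
    with x show "y \<in> {E. X (A - E) \<le> s}"
      by simp
  qed
  ultimately have harris: "?P U * ?P V \<le> ?P (U \<inter> V)"
    using Harris_ineq[OF \<open>finite A\<close>] by blast
  have "?P V = measure_pmf.prob (map_pmf (\<lambda>E. A - E) ?p) {E. X E \<le> s}"
    unfolding V_def by simp
  with lower have PV: "?P V > c"
    using map_pmf_of_set_Pow_complement[OF \<open>finite A\<close>] by simp
  have "?P (U \<inter> V) = ?P (U \<inter> V \<inter> Pow A)"
    using measure_Int_set_pmf[of ?p "U \<inter> V"] \<open>finite A\<close> by (simp add: Pow_not_empty)
  also have "\<dots> \<le> ?P (- {E. int (X E) - int (Z E) \<le> g})"
  proof (rule measure_pmf.finite_measure_mono)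
    show "U \<inter> V \<inter> Pow A \<subseteq> - {E. int (X E) - int (Z E) \<le> g}"
    proof
      fix E assume "E \<in> U \<inter> V \<inter> Pow A"
      then have "int s + g < int (X E)" "Z E \<le> s"
        using dual[of E] by (auto simp: U_def V_def)
      then show "E \<in> - {E. int (X E) - int (Z E) \<le> g}"
        by simp
    qed
  qed simp
  also have "\<dots> = 1 - ?P {E. int (X E) - int (Z E) \<le> g}"
    using measure_pmf.prob_compl[of "{E. int (X E) - int (Z E) \<le> g}" ?p] by (simp add: Compl_eq_Diff_UNIV)
  finally have "?P (U \<inter> V) < \<delta>"
    using close by linarith
  moreover have "?P U * c \<le> ?P U * ?P V"
    using PV by (intro mult_left_mono) auto
  ultimately have "?P U * c < \<delta>"
    using harris by linarith
  then show ?thesis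
    unfolding U_def using \<open>0 < c\<close> by (simp add: pos_less_divide_eq)
qed

lemma short_interval_of_high_probability:
  fixes X Z :: "'a set \<Rightarrow> nat" and g :: int
  assumes "finite A"
    and mono: "\<And>E E'. E \<subseteq> E' \<Longrightarrow> E' \<subseteq> A \<Longrightarrow> X E \<le> X E'"
    and dual: "\<And>E. E \<subseteq> A \<Longrightarrow> Z E \<le> X (A - E)"
    and close: "measure_pmf.prob (pmf_of_set (Pow A)) {E. int (X E) - int (Z E) \<le> g} > 1 - \<delta>"
    and "0 < c" "c < 1"
  shows "\<exists>s::int. measure_pmf.prob (pmf_of_set (Pow A))
    {E. s \<le> int (X E) \<and> int (X E) \<le> s + g} > 1 - c - \<delta> / c"
proof -
  let ?P = "measure_pmf.prob (pmf_of_set (Pow A))"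
  have "Pow A \<inter> {E. X E \<le> X A} = Pow A"
    using mono by blast
  then have "?P {E. X E \<le> X A} = 1"
    using \<open>finite A\<close> by (simp add: prob_pmf_of_set_Pow card_Pow)
  then obtain s where below: "?P {E. X E < s} \<le> c" and "?P {E. X E \<le> s} > c"
    using least_threshold[of c "measure_pmf (pmf_of_set (Pow A))" X "X A"] \<open>0 < c\<close> \<open>c < 1\<close> by auto
  then have above: "?P {E. int s + g < int (X E)} < \<delta> / c"
    using upper_tail_bound[OF \<open>finite A\<close> mono dual close] \<open>0 < c\<close> by blast
  let ?I = "{E. int s \<le> int (X E) \<and> int (X E) \<le> int s + g}"
  have "{E. X E < s} \<union> ?I \<union> {E. int s + g < int (X E)} = UNIV"
    by auto
  then have "1 = ?P ({E. X E < s} \<union> ?I \<union> {E. int s + g < int (X E)})"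
    using measure_pmf.prob_space[of "pmf_of_set (Pow A)"] by simp
  also have "\<dots> \<le> ?P ({E. X E < s} \<union> ?I) + ?P {E. int s + g < int (X E)}"
    by (rule measure_Un_le) simp_all
  also have "\<dots> \<le> ?P {E. X E < s} + ?P ?I + ?P {E. int s + g < int (X E)}"
    using measure_Un_le[of "{E. X E < s}" "measure_pmf (pmf_of_set (Pow A))" ?I] by simp
  finally have "?P ?I > 1 - c - \<delta> / c"
    using below above by linarith
  then show ?thesis by blast
qed

lemma finite_all_edges: "finite (all_edges n)"
  by (rule finite_subset[of _ "Pow {..<n}"]) (auto simp: all_edges_def)

lemma proper_colouring_id: "E \<subseteq> all_edges n \<Longrightarrow> proper_colouring n E n id"
  unfolding proper_colouring_def is_indep_def all_edges_def by auto

lemma proper_colouring_chromatic_number: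
  assumes "E \<subseteq> all_edges n"
  obtains f where "proper_colouring n E (chromatic_number n E) f"
  using LeastI_ex[of "\<lambda>k. \<exists>f. proper_colouring n E k f"] proper_colouring_id[OF assms]
  unfolding chromatic_number_def by blast

lemma proper_colouring_subset:
  "proper_colouring n E' k f \<Longrightarrow> E \<subseteq> E' \<Longrightarrow> proper_colouring n E k f"
  unfolding proper_colouring_def is_indep_def by blast

lemma chromatic_number_mono:
  assumes "E \<subseteq> E'" "E' \<subseteq> all_edges n"
  shows "chromatic_number n E \<le> chromatic_number n E'"
proof -
  obtain f where "proper_colouring n E' (chromatic_number n E') f"
    using proper_colouring_chromatic_number[OF assms(2)] .
  then have "proper_colouring n E (chromatic_number n E') f"
    using assms(1) by (rule proper_colouring_subset)
  then show ?thesis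
    unfolding chromatic_number_def by (blast intro: Least_le)
qed

lemma proper_colouring_compl_imp_cochromatic_colouring:
  assumes "proper_colouring n (all_edges n - E) k f"
  shows "cochromatic_colouring n E k f"
proof -
  have "is_clique E {v. v < n \<and> f v = c}" if "c < k" for c
  proof -
    have "{u, v} \<in> all_edges n" if "u < n" "v < n" "u \<noteq> v" for u v
      using that by (auto simp: all_edges_def)
    then show ?thesis
      using assms \<open>c < k\<close> unfolding proper_colouring_def is_indep_def is_clique_def by blast
  qed
  then show ?thesis
    using assms unfolding proper_colouring_def cochromatic_colouring_def by blast
qed

lemma cochromatic_number_le_chromatic_number_compl:
  "cochromatic_number n E \<le> chromatic_number n (all_edges n - E)"
proof -
  obtain f where "proper_colouring n (all_edges n - E) (chromatic_number n (all_edges n - E)) f"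
    using proper_colouring_chromatic_number[of "all_edges n - E" n] by blast
  then show ?thesis
    unfolding cochromatic_number_def
    by (blast intro: Least_le proper_colouring_compl_imp_cochromatic_colouring)
qed

theorem proposition3:
  fixes g :: "nat \<Rightarrow> int"
  assumes "\<forall>n. measure_pmf.prob (Gnp_half n)
      {E. int (chromatic_number n E) - int (cochromatic_number n E) \<le> g n} > 0.999"
  shows "\<exists>s t :: nat \<Rightarrow> int. \<forall>n. t n - s n = g n \<and>
      measure_pmf.prob (Gnp_half n)
        {E. s n \<le> int (chromatic_number n E) \<and> int (chromatic_number n E) \<le> t n} > 0.9"
proof -
  have "\<exists>s. measure_pmf.prob (Gnp_half n)
      {E. s \<le> int (chromatic_number n E) \<and> int (chromatic_number n E) \<le> s + g n} > 0.9" for n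
  proof -
    have "\<exists>s. measure_pmf.prob (Gnp_half n)
        {E. s \<le> int (chromatic_number n E) \<and> int (chromatic_number n E) \<le> s + g n}
          > 1 - 0.05 - 0.001 / 0.05"
      unfolding Gnp_half_def
    proof (rule short_interval_of_high_probability[OF finite_all_edges])
      show "measure_pmf.prob (pmf_of_set (Pow (all_edges n)))
          {E. int (chromatic_number n E) - int (cochromatic_number n E) \<le> g n} > 1 - 0.001"
        using assms unfolding Gnp_half_def by simp
    qed (simp_all add: chromatic_number_mono cochromatic_number_le_chromatic_number_compl)
    moreover have "(0.9::real) < 1 - 0.05 - 0.001 / 0.05"
      by simp
    ultimately show ?thesis
      by (blast intro: less_trans)
  qed
  then obtain s where "\<forall>n. measure_pmf.prob (Gnp_half n)
      {E. s n \<le> int (chromatic_number n E) \<and> int (chromatic_number n E) \<le> s n + g n} > 0.9"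
    by metis
  then show ?thesis
    by (intro exI[of _ s] exI[of _ "\<lambda>n. s n + g n"]) simp
qed

end
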